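(* Assume Martin's Axiom. Then there exists a very mad family, and every very mad family has cardinality $2^{\aleph_0}$.
   Context: Functions $f \in \mathbb{N}^{\mathbb{N}}$ are identified with their graphs. Two functions $g_0,g_1 \in \mathbb{N}^{\mathbb{N}}$ are almost disjoint if $\{n : g_0(n)=g_1(n)\}$ is finite; $\mathcal{A}\subseteq\mathbb{N}^{\mathbb{N}}$ is an almost disjoint family of functions if any two distinct members are almost disjoint. A function $f$ is finitely covered by $\mathcal{A}$ if there are $g_0,\dots,g_n \in \mathcal{A}$ with $\{k : f(k)\notin\{g_0(k),\dots,g_n(k)\}\}$ finite; a family $F$ is finitely covered by $\mathcal{A}$ if some member of $F$ is. A family $\mathcal{A} \subseteq \mathbb{N}^{\mathbb{N}}$ is a very mad family if it is an almost disjoint family of functions and for every $F \subseteq \mathbb{N}^{\mathbb{N}}$ with $|F| < |\mathcal{A}|$ that is not finitely covered by $\mathcal{A}$, there is $g \in \mathcal{A}$ such that $\{n : f(n)=g(n)\}$ is infinite for every $f \in F$. *)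

theory Defs
  imports Main "HOL-Library.Equipollence"
begin

definition almost_disjoint_family :: "(nat \<Rightarrow> nat) set \<Rightarrow> bool" where
  "almost_disjoint_family A \<longleftrightarrow>
     (\<forall>g0\<in>A. \<forall>g1\<in>A. g0 \<noteq> g1 \<longrightarrow> finite {n. g0 n = g1 n})"

definition fin_covered_fun :: "(nat \<Rightarrow> nat) \<Rightarrow> (nat \<Rightarrow> nat) set \<Rightarrow> bool" where
  "fin_covered_fun f A \<longleftrightarrow>
     (\<exists>S. S \<subseteq> A \<and> finite S \<and> S \<noteq> {} \<and> finite {k. f k \<notin> (\<lambda>g. g k) ` S})"

definition fin_covered_family :: "(nat \<Rightarrow> nat) set \<Rightarrow> (nat \<Rightarrow> nat) set \<Rightarrow> bool" where
  "fin_covered_family F A \<longleftrightarrow> (\<exists>f\<in>F. fin_covered_fun f A)"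

definition very_mad :: "(nat \<Rightarrow> nat) set \<Rightarrow> bool" where
  "very_mad A \<longleftrightarrow> almost_disjoint_family A \<and>
     (\<forall>F. F \<prec> A \<and> \<not> fin_covered_family F A \<longrightarrow>
        (\<exists>g\<in>A. \<forall>f\<in>F. infinite {n. f n = g n}))"

text \<open>A forcing notion: a nonempty carrier P with a preorder le (le q p: q extends p).\<close>
definition forcing_poset :: "'a set \<Rightarrow> ('a \<Rightarrow> 'a \<Rightarrow> bool) \<Rightarrow> bool" where
  "forcing_poset P le \<longleftrightarrow> P \<noteq> {} \<and> (\<forall>p\<in>P. le p p) \<and>
     (\<forall>p\<in>P. \<forall>q\<in>P. \<forall>r\<in>P. le p q \<and> le q r \<longrightarrow> le p r) \<and>
     (\<forall>p\<in>P. \<forall>q\<in>P. le p q \<and> le q p \<longrightarrow> p = q)"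

definition compatible :: "'a set \<Rightarrow> ('a \<Rightarrow> 'a \<Rightarrow> bool) \<Rightarrow> 'a \<Rightarrow> 'a \<Rightarrow> bool" where
  "compatible P le p q \<longleftrightarrow> (\<exists>r\<in>P. le r p \<and> le r q)"

definition antichain :: "'a set \<Rightarrow> ('a \<Rightarrow> 'a \<Rightarrow> bool) \<Rightarrow> 'a set \<Rightarrow> bool" where
  "antichain P le X \<longleftrightarrow> X \<subseteq> P \<and>
     (\<forall>p\<in>X. \<forall>q\<in>X. p \<noteq> q \<longrightarrow> \<not> compatible P le p q)"

definition ccc :: "'a set \<Rightarrow> ('a \<Rightarrow> 'a \<Rightarrow> bool) \<Rightarrow> bool" where
  "ccc P le \<longleftrightarrow> (\<forall>X. antichain P le X \<longrightarrow> countable X)"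

definition dense_in :: "'a set \<Rightarrow> ('a \<Rightarrow> 'a \<Rightarrow> bool) \<Rightarrow> 'a set \<Rightarrow> bool" where
  "dense_in P le D \<longleftrightarrow> D \<subseteq> P \<and> (\<forall>p\<in>P. \<exists>q\<in>D. le q p)"

definition is_filter :: "'a set \<Rightarrow> ('a \<Rightarrow> 'a \<Rightarrow> bool) \<Rightarrow> 'a set \<Rightarrow> bool" where
  "is_filter P le G \<longleftrightarrow> G \<subseteq> P \<and> G \<noteq> {} \<and>
     (\<forall>p\<in>G. \<forall>q\<in>P. le p q \<longrightarrow> q \<in> G) \<and>
     (\<forall>p\<in>G. \<forall>q\<in>G. \<exists>r\<in>G. le r p \<and> le r q)"

text \<open>Posets are taken with carrier inside
  the type nat set set (so all posets of size at most 2^(2^aleph0) are covered; MA for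
  posets of size at most continuum is already equivalent to full MA).\<close>
definition martins_axiom :: bool where
  "martins_axiom \<longleftrightarrow>
     (\<forall>(P :: nat set set set) le \<D>.
        forcing_poset P le \<and> ccc P le \<and> \<D> \<prec> (UNIV :: nat set set) \<and>
        (\<forall>D\<in>\<D>. dense_in P le D) \<longrightarrow>
        (\<exists>G. is_filter P le G \<and> (\<forall>D\<in>\<D>. G \<inter> D \<noteq> {})))"

end

(*
  Under MA the continuum c behaves, for the purposes of this argument, like aleph_1:
  for fewer than c constraints there is a single function in the Baire space N^N meeting
  all of them.

  1. Cardinal bookkeeping: N^N has size c (as does the power set of N), and
     "less_continuum X" expresses |X| < c; such sets are closed under the usual operations.
  2. MA is stated for posets inside nat set set set; it transfers along any injection.
  3. A single ccc forcing -- finite stems together with finitely many "promises" -- yields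
     MA_generic_function: given fewer than c promises and targets, some g keeps every
     promise almost everywhere and agrees with every target infinitely often.  Two
     instances follow: MA_avoid_and_hit (almost disjoint from given functions, hitting
     given uncovered ones) and MA_dominating, which makes c a regular cardinal.
  4. Size: a very mad family of size < c admits an almost disjoint new function g, and {g}
     then violates very madness (very_mad_card).
  5. Existence: enumerate N^N along a well-order of type c and choose by transfinite
     recursion a function almost disjoint from all earlier choices and hitting every
     earlier function not finitely covered by them; by regularity every family of size
     < c lies below some stage, which witnesses very madness (very_mad_exists).
*)

theory Submission
  imports Defs "HOL-Library.Countable_Set_Type"
begin

unbundle cardinal_syntax

lemma lesspoll_iff_ordLess: "A \<prec> B \<longleftrightarrow> |A| <o |B|"
  unfolding lesspoll_def lepoll_def card_of_ordLeq eqpoll_iff_card_of_ordIso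
  using ordLeq_iff_ordLess_or_ordIso ordLess_imp_ordLeq not_ordLess_ordIso by blast

definition graph_code :: "(nat \<Rightarrow> nat) \<Rightarrow> nat set" where
  "graph_code f = range (\<lambda>n. prod_encode (n, f n))"

lemma inj_graph_code: "inj graph_code"
proof (rule injI)
  fix f g assume eq: "graph_code f = graph_code g"
  show "f = g"
  proof
    fix n
    have "prod_encode (n, f n) \<in> graph_code g" using eq by (auto simp: graph_code_def)
    then obtain m where "prod_encode (n, f n) = prod_encode (m, g m)"
      by (auto simp: graph_code_def)
    then show "f n = g n" by (auto simp: prod_encode_eq)
  qed
qed

lemma funs_eqpoll_sets: "(UNIV :: (nat \<Rightarrow> nat) set) \<approx> (UNIV :: nat set set)"
proof (rule lepoll_antisym)
  show "(UNIV :: (nat \<Rightarrow> nat) set) \<lesssim> (UNIV :: nat set set)"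
    unfolding lepoll_def using inj_graph_code by blast
  have "inj (\<lambda>X::nat set. \<lambda>n. if n \<in> X then 1 else 0 :: nat)"
  proof (rule injI)
    fix X Y :: "nat set"
    assume h: "(\<lambda>n. if n \<in> X then 1 else 0 :: nat) = (\<lambda>n. if n \<in> Y then 1 else 0)"
    show "X = Y"
    proof (rule set_eqI)
      fix n from fun_cong[OF h, of n] show "n \<in> X \<longleftrightarrow> n \<in> Y" by (auto split: if_splits)
    qed
  qed
  then show "(UNIV :: nat set set) \<lesssim> (UNIV :: (nat \<Rightarrow> nat) set)"
    unfolding lepoll_def by blast
qed

(* The cardinal c = |N^N|, realised as a well-order on the Baire space itself, and the
   predicate "of size less than c" for sets of any type. *)
abbreviation continuum :: "((nat \<Rightarrow> nat) \<times> (nat \<Rightarrow> nat)) set" where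
  "continuum \<equiv> |UNIV :: (nat \<Rightarrow> nat) set|"

lemma continuum_ordIso_sets: "continuum =o |UNIV :: nat set set|"
  using funs_eqpoll_sets eqpoll_iff_card_of_ordIso by blast

definition less_continuum :: "'a set \<Rightarrow> bool" where
  "less_continuum X \<longleftrightarrow> |X| <o continuum"

lemma less_continuum_iff_lesspoll: "less_continuum X \<longleftrightarrow> X \<prec> (UNIV :: nat set set)"
  unfolding less_continuum_def lesspoll_iff_ordLess
proof
  assume "|X| <o continuum"
  then show "|X| <o |UNIV :: nat set set|"
    using continuum_ordIso_sets by (rule ordLess_ordIso_trans)
next
  assume "|X| <o |UNIV :: nat set set|"
  then show "|X| <o continuum"
    using ordIso_symmetric[OF continuum_ordIso_sets] by (rule ordLess_ordIso_trans)
qed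

lemma infinite_funs: "infinite (UNIV :: (nat \<Rightarrow> nat) set)"
proof -
  have "infinite (UNIV :: nat set set)"
    using finite_Pow_iff[of "UNIV :: nat set"] by simp
  then show ?thesis using funs_eqpoll_sets eqpoll_finite_iff by blast
qed

lemma countable_less_continuum: "countable X \<Longrightarrow> less_continuum X"
proof -
  assume "countable X"
  then have "|X| \<le>o |UNIV :: nat set|" by (simp add: countable_card_of_nat)
  moreover have "|UNIV :: nat set| <o |UNIV :: nat set set|"
    using card_of_Pow[of "UNIV :: nat set"] by simp
  ultimately have "|X| <o |UNIV :: nat set set|" by (rule ordLeq_ordLess_trans)
  then show ?thesis by (simp add: less_continuum_iff_lesspoll lesspoll_iff_ordLess)
qed

lemma less_continuum_subset:
  assumes "less_continuum Y" and "X \<subseteq> Y" shows "less_continuum X"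
  using ordLeq_ordLess_trans[OF card_of_mono1[OF assms(2)]] assms(1)
  unfolding less_continuum_def .

lemma less_continuum_image:
  assumes "less_continuum X" shows "less_continuum (f ` X)"
  using ordLeq_ordLess_trans[OF card_of_image] assms unfolding less_continuum_def .

lemma less_continuum_Un:
  assumes "less_continuum X" and "less_continuum Y" shows "less_continuum (X \<union> Y)"
  using card_of_Un_ordLess_infinite[OF infinite_funs] assms unfolding less_continuum_def .

lemma less_continuum_times_nat:
  assumes "less_continuum H" shows "less_continuum (H \<times> (UNIV :: nat set))"
proof (cases "finite H")
  case True
  then show ?thesis by (simp add: countable_less_continuum countable_finite)
next
  case False
  moreover have "|UNIV :: nat set| \<le>o |H|" using False infinite_iff_card_of_nat by blast
  ultimately have "|H \<times> (UNIV :: nat set)| =o |H|"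
    using card_of_Times_infinite[OF False, of "UNIV :: nat set"] by simp
  then show ?thesis using assms ordIso_ordLess_trans unfolding less_continuum_def by blast
qed

locale poset_embedding =
  fixes P :: "'a set" and le :: "'a \<Rightarrow> 'a \<Rightarrow> bool"
    and le' :: "'b \<Rightarrow> 'b \<Rightarrow> bool" and e :: "'a \<Rightarrow> 'b"
  assumes inj: "inj_on e P"
    and le_iff: "\<And>p q. p \<in> P \<Longrightarrow> q \<in> P \<Longrightarrow> le' (e p) (e q) \<longleftrightarrow> le p q"
begin

lemma compatible_iff:
  "p \<in> P \<Longrightarrow> q \<in> P \<Longrightarrow> compatible (e ` P) le' (e p) (e q) \<longleftrightarrow> compatible P le p q"
  unfolding compatible_def by (auto simp: le_iff)

lemma forcing_poset_image:
  assumes "forcing_poset P le" shows "forcing_poset (e ` P) le'"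
  unfolding forcing_poset_def
proof (intro conjI ballI impI)
  show "e ` P \<noteq> {}" using assms unfolding forcing_poset_def by blast
  fix x y z assume "x \<in> e ` P" "y \<in> e ` P" "z \<in> e ` P"
  then obtain p q r where pqr: "p \<in> P" "q \<in> P" "r \<in> P" "x = e p" "y = e q" "z = e r"
    by blast
  show "le' x x" using assms pqr le_iff unfolding forcing_poset_def by blast
  show "le' x z" if "le' x y \<and> le' y z"
    using that assms pqr le_iff unfolding forcing_poset_def by metis
  show "x = y" if "le' x y \<and> le' y x"
    using that assms pqr le_iff unfolding forcing_poset_def by metis
qed

lemma ccc_image:
  assumes "ccc P le" shows "ccc (e ` P) le'"
  unfolding ccc_def
proof (intro allI impI)
  fix X' assume X': "antichain (e ` P) le' X'"
  define X where "X = P \<inter> e -` X'"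
  have "X' = e ` X" using X' unfolding X_def antichain_def by blast
  moreover have "antichain P le X"
    unfolding antichain_def
  proof (intro conjI ballI impI)
    fix p q assume "p \<in> X" "q \<in> X" "p \<noteq> q"
    then have "e p \<noteq> e q" "p \<in> P" "q \<in> P" "e p \<in> X'" "e q \<in> X'"
      using inj_onD[OF inj] unfolding X_def by auto
    then show "\<not> compatible P le p q"
      using X' compatible_iff unfolding antichain_def by blast
  qed (simp add: X_def)
  ultimately show "countable X'" using assms unfolding ccc_def by blast
qed

lemma dense_image: "dense_in P le D \<Longrightarrow> dense_in (e ` P) le' (e ` D)"
  unfolding dense_in_def using le_iff by fast

lemma filter_preimage:
  assumes G': "is_filter (e ` P) le' G'" shows "is_filter P le (P \<inter> e -` G')"
  unfolding is_filter_def
proof (intro conjI ballI impI)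
  have sub: "G' \<subseteq> e ` P" using G' unfolding is_filter_def by blast
  then show "P \<inter> e -` G' \<noteq> {}" using G' unfolding is_filter_def by blast
  fix p assume p: "p \<in> P \<inter> e -` G'"
  show "q \<in> P \<inter> e -` G'" if "q \<in> P" "le p q" for q
    using G' p that le_iff unfolding is_filter_def by auto
  show "\<exists>r\<in>P \<inter> e -` G'. le r p \<and> le r q" if q: "q \<in> P \<inter> e -` G'" for q
  proof -
    obtain r' where "r' \<in> G'" "le' r' (e p)" "le' r' (e q)"
      using G' p q unfolding is_filter_def by blast
    then obtain r where "r \<in> P" "r' = e r" using sub by blast
    then show ?thesis using \<open>r' \<in> G'\<close> \<open>le' r' (e p)\<close> \<open>le' r' (e q)\<close> p q le_iff by auto
  qed
qed simp

end

lemma MA_transfer: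
  fixes P :: "'a set" and e :: "'a \<Rightarrow> nat set set"
  assumes MA: martins_axiom and inj: "inj_on e P"
    and poset: "forcing_poset P le" and ccc: "ccc P le"
    and few: "\<D> \<prec> (UNIV :: nat set set)" and dense: "\<forall>D\<in>\<D>. dense_in P le D"
  shows "\<exists>G. is_filter P le G \<and> (\<forall>D\<in>\<D>. G \<inter> D \<noteq> {})"
proof -
  define le' where "le' x y \<longleftrightarrow> le (inv_into P e x) (inv_into P e y)" for x y
  interpret poset_embedding P le le' e
    by unfold_locales (simp_all add: inj le'_def)
  have few': "(\<lambda>D. e ` D) ` \<D> \<prec> (UNIV :: nat set set)"
    using image_lepoll few lesspoll_trans1 by blast
  have dense': "\<forall>D'\<in>(\<lambda>D. e ` D) ` \<D>. dense_in (e ` P) le' D'"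
    using dense dense_image by blast
  obtain G' where G': "is_filter (e ` P) le' G'" "\<forall>D'\<in>(\<lambda>D. e ` D) ` \<D>. G' \<inter> D' \<noteq> {}"
    using MA[unfolded martins_axiom_def, rule_format, of "e ` P" le' "(\<lambda>D. e ` D) ` \<D>"]
      forcing_poset_image[OF poset] ccc_image[OF ccc] few' dense' by blast
  have "(P \<inter> e -` G') \<inter> D \<noteq> {}" if D: "D \<in> \<D>" for D
  proof -
    have "G' \<inter> e ` D \<noteq> {}" using G'(2) D by blast
    moreover have "D \<subseteq> P" using dense D unfolding dense_in_def by blast
    ultimately show ?thesis by blast
  qed
  then show ?thesis using filter_preimage[OF G'(1)] by blast
qed

(* Forcing conditions: a finite stem s of the generic function together with a finite set K
   of functions from B whose constraint "ok k n" must be respected by all later stem values. *)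
type_synonym condition = "nat list \<times> (nat \<Rightarrow> nat) set"

definition conds :: "(nat \<Rightarrow> nat) set \<Rightarrow> condition set" where
  "conds B = {c. finite (snd c) \<and> snd c \<subseteq> B}"

definition ext_cond :: "((nat \<Rightarrow> nat) \<Rightarrow> nat \<Rightarrow> nat \<Rightarrow> bool) \<Rightarrow> condition \<Rightarrow> condition \<Rightarrow> bool" where
  "ext_cond ok c d \<longleftrightarrow> (\<exists>u. fst c = fst d @ u) \<and> snd d \<subseteq> snd c \<and>
     (\<forall>k\<in>snd d. \<forall>n. length (fst d) \<le> n \<and> n < length (fst c) \<longrightarrow> ok k n (fst c ! n))"

lemma conds_iff [simp]: "(s, K) \<in> conds B \<longleftrightarrow> finite K \<and> K \<subseteq> B"
  by (simp add: conds_def)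

lemma ext_cond_iff [simp]:
  "ext_cond ok (s', K') (s, K) \<longleftrightarrow> (\<exists>u. s' = s @ u) \<and> K \<subseteq> K' \<and>
     (\<forall>k\<in>K. \<forall>n. length s \<le> n \<and> n < length s' \<longrightarrow> ok k n (s' ! n))"
  by (simp add: ext_cond_def)

lemma ext_cond_trans:
  assumes "ext_cond ok c d" and "ext_cond ok d f" shows "ext_cond ok c f"
proof -
  obtain s1 K1 s2 K2 s3 K3 where c: "c = (s1, K1)" and d: "d = (s2, K2)" and f: "f = (s3, K3)"
    by (cases c, cases d, cases f) blast
  from assms obtain u w where s: "s1 = s2 @ u" "s2 = s3 @ w" and K: "K2 \<subseteq> K1" "K3 \<subseteq> K2"
    and ok1: "\<forall>k\<in>K2. \<forall>n. length s2 \<le> n \<and> n < length s1 \<longrightarrow> ok k n (s1 ! n)"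
    and ok2: "\<forall>k\<in>K3. \<forall>n. length s3 \<le> n \<and> n < length s2 \<longrightarrow> ok k n (s2 ! n)"
    unfolding c d f by auto
  have "ok k n (s1 ! n)" if "k \<in> K3" "length s3 \<le> n" "n < length s1" for k n
  proof (cases "n < length s2")
    case True
    then show ?thesis using ok2 that s(1) by (simp add: nth_append)
  next
    case False
    then show ?thesis using ok1 that K(2) by auto
  qed
  then show ?thesis using s K unfolding c f by auto
qed

lemma conds_poset: "forcing_poset (conds B) (ext_cond ok)"
  unfolding forcing_poset_def
proof (intro conjI ballI impI)
  show "conds B \<noteq> {}" using conds_iff[of "[]" "{}" B] by blast
  fix c d f :: condition
  show "ext_cond ok c c" by (cases c) auto
  show "ext_cond ok c f" if "ext_cond ok c d \<and> ext_cond ok d f"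
    using that ext_cond_trans by blast
  show "c = d" if "ext_cond ok c d \<and> ext_cond ok d c"
  proof -
    have "fst c = fst d" "snd c = snd d"
      using that unfolding ext_cond_def by auto
    then show ?thesis by (simp add: prod_eq_iff)
  qed
qed

(* Conditions with the same stem are compatible (join the promises); since there are only
   countably many stems, every antichain is countable. *)
lemma conds_ccc: "ccc (conds B) (ext_cond ok)"
  unfolding ccc_def
proof (intro allI impI)
  fix X assume X: "antichain (conds B) (ext_cond ok) X"
  have "inj_on fst X"
  proof (rule inj_onI, rule ccontr)
    fix c d assume cd: "c \<in> X" "d \<in> X" "fst c = fst d" "c \<noteq> d"
    obtain s K where c: "c = (s, K)" by (cases c) blast
    obtain L where d: "d = (s, L)" using cd(3) c by (cases d) auto
    have "c \<in> conds B" "d \<in> conds B" using X cd unfolding antichain_def by blast+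
    then have "(s, K \<union> L) \<in> conds B" using c d by auto
    moreover have "ext_cond ok (s, K \<union> L) c" "ext_cond ok (s, K \<union> L) d" using c d by auto
    ultimately have "compatible (conds B) (ext_cond ok) c d" unfolding compatible_def by blast
    then show False using X cd unfolding antichain_def by blast
  qed
  moreover have "countable (fst ` X)" by simp
  ultimately show "countable X" by (blast intro: countable_image_inj_on)
qed

definition cond_code :: "condition \<Rightarrow> nat set set" where
  "cond_code c = insert {0, Suc (to_nat (fst c))} ((\<lambda>k. Suc ` graph_code k) ` snd c)"

lemma inj_cond_code: "inj cond_code"
proof (rule injI)
  fix c d assume eq: "cond_code c = cond_code d"
  have marked: "{x \<in> cond_code c. 0 \<in> x} = {{0, Suc (to_nat (fst c))}}" for c
    unfolding cond_code_def by auto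
  have unmarked: "{x \<in> cond_code c. 0 \<notin> x} = (\<lambda>k. Suc ` graph_code k) ` snd c" for c
    unfolding cond_code_def by auto
  have "{0, Suc (to_nat (fst c))} = {0, Suc (to_nat (fst d))}"
    using marked[of c] marked[of d] eq by simp
  then have "Suc (to_nat (fst c)) = Suc (to_nat (fst d))"
    by (metis doubleton_eq_iff nat.distinct(1))
  then have "fst c = fst d" by simp
  moreover have "inj (\<lambda>k. Suc ` graph_code k)"
    using inj_graph_code by (auto simp: inj_def inj_image_eq_iff)
  then have "snd c = snd d"
    using unmarked[of c] unmarked[of d] eq by (simp add: inj_image_eq_iff)
  ultimately show "c = d" by (simp add: prod_eq_iff)
qed

lemma nth_append_map_upt:
  "length s \<le> n \<Longrightarrow> n < N \<Longrightarrow> (s @ map w [length s..<N]) ! n = w n"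
  by (simp add: nth_append)

lemma ext_cond_append:
  assumes "\<And>n. length s \<le> n \<Longrightarrow> n < N \<Longrightarrow> \<forall>k\<in>K. ok k n (w n)"
  shows "ext_cond ok (s @ map w [length s..<N], K) (s, K)"
  using assms by (auto simp: nth_append_map_upt)

definition long_conds :: "(nat \<Rightarrow> nat) set \<Rightarrow> nat \<Rightarrow> condition set" where
  "long_conds B m = {c \<in> conds B. m \<le> length (fst c)}"

definition promise_conds :: "(nat \<Rightarrow> nat) set \<Rightarrow> (nat \<Rightarrow> nat) \<Rightarrow> condition set" where
  "promise_conds B b = {c \<in> conds B. b \<in> snd c}"

definition hit_conds :: "(nat \<Rightarrow> nat) set \<Rightarrow> (nat \<Rightarrow> nat) \<Rightarrow> nat \<Rightarrow> condition set" where
  "hit_conds B h m = {c \<in> conds B. \<exists>n. m \<le> n \<and> n < length (fst c) \<and> fst c ! n = h n}"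

(* Extending a stem needs, at each new position, a value respecting the finitely many
   promises at hand (hypothesis sat); hitting h beyond m additionally needs such a position
   where h itself respects them (hypothesis hit). *)
lemma dense_long_conds:
  assumes sat: "\<And>K n. finite K \<Longrightarrow> K \<subseteq> B \<Longrightarrow> \<exists>v. \<forall>k\<in>K. ok k n v"
  shows "dense_in (conds B) (ext_cond ok) (long_conds B m)"
  unfolding dense_in_def
proof (intro conjI ballI)
  show "long_conds B m \<subseteq> conds B" by (auto simp: long_conds_def)
  fix c assume "c \<in> conds B"
  then obtain s K where c: "c = (s, K)" and K: "finite K" "K \<subseteq> B" by (cases c) auto
  define w where "w n = (SOME v. \<forall>k\<in>K. ok k n v)" for n
  have "\<forall>k\<in>K. ok k n (w n)" for n unfolding w_def using someI_ex[OF sat[OF K]] .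
  then have "ext_cond ok (s @ map w [length s..<m], K) c" unfolding c by (rule ext_cond_append)
  moreover have "(s @ map w [length s..<m], K) \<in> long_conds B m"
    using K by (auto simp: long_conds_def)
  ultimately show "\<exists>d\<in>long_conds B m. ext_cond ok d c" by blast
qed

lemma dense_promise_conds:
  assumes "b \<in> B" shows "dense_in (conds B) (ext_cond ok) (promise_conds B b)"
  unfolding dense_in_def
proof (intro conjI ballI)
  show "promise_conds B b \<subseteq> conds B" by (auto simp: promise_conds_def)
  fix c assume "c \<in> conds B"
  then obtain s K where c: "c = (s, K)" and K: "finite K" "K \<subseteq> B" by (cases c) auto
  have "(s, insert b K) \<in> promise_conds B b" using K assms by (simp add: promise_conds_def)
  moreover have "ext_cond ok (s, insert b K) c" unfolding c by auto
  ultimately show "\<exists>d\<in>promise_conds B b. ext_cond ok d c" by blast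
qed

lemma dense_hit_conds:
  assumes sat: "\<And>K n. finite K \<Longrightarrow> K \<subseteq> B \<Longrightarrow> \<exists>v. \<forall>k\<in>K. ok k n v"
    and hit: "\<And>K m. finite K \<Longrightarrow> K \<subseteq> B \<Longrightarrow> \<exists>n\<ge>m. \<forall>k\<in>K. ok k n (h n)"
  shows "dense_in (conds B) (ext_cond ok) (hit_conds B h m)"
  unfolding dense_in_def
proof (intro conjI ballI)
  show "hit_conds B h m \<subseteq> conds B" by (auto simp: hit_conds_def)
  fix c assume "c \<in> conds B"
  then obtain s K where c: "c = (s, K)" and K: "finite K" "K \<subseteq> B" by (cases c) auto
  obtain n where n: "max m (length s) \<le> n" "\<forall>k\<in>K. ok k n (h n)" using hit[OF K] by blast
  define w where "w = (\<lambda>i. SOME v. \<forall>k\<in>K. ok k i v)(n := h n)"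
  have "\<forall>k\<in>K. ok k i (w i)" for i
    using n(2) someI_ex[OF sat[OF K, of i]] unfolding w_def by auto
  then have "ext_cond ok (s @ map w [length s..<Suc n], K) c" unfolding c by (rule ext_cond_append)
  moreover have "(s @ map w [length s..<Suc n]) ! n = h n"
    using n(1) nth_append_map_upt[of s n "Suc n" w] by (simp add: w_def)
  then have "(s @ map w [length s..<Suc n], K) \<in> hit_conds B h m"
    using K n(1) unfolding hit_conds_def by auto
  ultimately show "\<exists>d\<in>hit_conds B h m. ext_cond ok d c" by blast
qed

(* The stems of the members of a filter are pairwise compatible, so they define a
   single function on the positions they reach. *)
lemma filter_stems_agree:
  assumes G: "is_filter (conds B) (ext_cond ok) G" and cd: "c \<in> G" "d \<in> G"
    and n: "n < length (fst c)" "n < length (fst d)"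
  shows "fst c ! n = fst d ! n"
proof -
  obtain r where "r \<in> G" "ext_cond ok r c" "ext_cond ok r d"
    using G cd unfolding is_filter_def by blast
  then obtain u w where "fst r = fst c @ u" "fst r = fst d @ w" unfolding ext_cond_def by blast
  then show ?thesis using n by (metis nth_append_left)
qed

definition generic_fun :: "condition set \<Rightarrow> nat \<Rightarrow> nat" where
  "generic_fun G n = (SOME v. \<exists>c\<in>G. n < length (fst c) \<and> fst c ! n = v)"

lemma generic_fun_eq:
  assumes G: "is_filter (conds B) (ext_cond ok) G" and c: "c \<in> G" "n < length (fst c)"
  shows "generic_fun G n = fst c ! n"
  unfolding generic_fun_def
proof (rule someI2)
  show "\<exists>d\<in>G. n < length (fst d) \<and> fst d ! n = fst c ! n" using c by blast
  show "v = fst c ! n" if "\<exists>d\<in>G. n < length (fst d) \<and> fst d ! n = v" for v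
    using that filter_stems_agree[OF G _ c(1) _ c(2)] by blast
qed

lemma generic_fun_keeps_promise:
  assumes G: "is_filter (conds B) (ext_cond ok) G" and long: "\<And>m. G \<inter> long_conds B m \<noteq> {}"
    and promise: "G \<inter> promise_conds B b \<noteq> {}"
  shows "finite {n. \<not> ok b n (generic_fun G n)}"
proof -
  obtain c0 where c0: "c0 \<in> G" "b \<in> snd c0" using promise unfolding promise_conds_def by blast
  have "ok b n (generic_fun G n)" if n: "length (fst c0) \<le> n" for n
  proof -
    obtain c1 where c1: "c1 \<in> G" "Suc n \<le> length (fst c1)"
      using long[of "Suc n"] unfolding long_conds_def by blast
    obtain r where r: "r \<in> G" "ext_cond ok r c0" "ext_cond ok r c1"
      using G c0(1) c1(1) unfolding is_filter_def by blast
    have len: "n < length (fst r)" using r(3) c1(2) unfolding ext_cond_def by auto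
    then have "ok b n (fst r ! n)" using r(2) c0(2) n unfolding ext_cond_def by blast
    then show ?thesis using generic_fun_eq[OF G r(1) len] by simp
  qed
  then have "{n. \<not> ok b n (generic_fun G n)} \<subseteq> {..<length (fst c0)}" using not_le by auto
  then show ?thesis by (rule finite_subset) simp
qed

lemma generic_fun_hits:
  assumes G: "is_filter (conds B) (ext_cond ok) G" and hit: "\<And>m. G \<inter> hit_conds B h m \<noteq> {}"
  shows "infinite {n. generic_fun G n = h n}"
  unfolding infinite_nat_iff_unbounded_le
proof
  fix m
  obtain c where c: "c \<in> G" "c \<in> hit_conds B h m" using hit[of m] by blast
  then obtain n where "m \<le> n" "n < length (fst c)" "fst c ! n = h n"
    unfolding hit_conds_def by blast
  then show "\<exists>n\<ge>m. n \<in> {n. generic_fun G n = h n}" using generic_fun_eq[OF G c(1)] by auto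
qed

theorem MA_generic_function:
  fixes B H :: "(nat \<Rightarrow> nat) set" and ok :: "(nat \<Rightarrow> nat) \<Rightarrow> nat \<Rightarrow> nat \<Rightarrow> bool"
  assumes MA: martins_axiom and small: "less_continuum B" "less_continuum H"
    and sat: "\<And>K n. finite K \<Longrightarrow> K \<subseteq> B \<Longrightarrow> \<exists>v. \<forall>k\<in>K. ok k n v"
    and hit: "\<And>h K m. h \<in> H \<Longrightarrow> finite K \<Longrightarrow> K \<subseteq> B \<Longrightarrow> \<exists>n\<ge>m. \<forall>k\<in>K. ok k n (h n)"
  shows "\<exists>g. (\<forall>b\<in>B. finite {n. \<not> ok b n (g n)}) \<and> (\<forall>h\<in>H. infinite {n. g n = h n})"
proof -
  define \<D> where "\<D> = promise_conds B ` B \<union> range (long_conds B) \<union>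
    (\<lambda>(h, m). hit_conds B h m) ` (H \<times> UNIV)"
  have dense: "\<forall>D\<in>\<D>. dense_in (conds B) (ext_cond ok) D"
    unfolding \<D>_def using dense_promise_conds dense_long_conds[OF sat] dense_hit_conds[OF sat hit]
    by auto
  have "less_continuum (promise_conds B ` B)" using small(1) by (rule less_continuum_image)
  moreover have "less_continuum (range (long_conds B))" by (simp add: countable_less_continuum)
  moreover have "less_continuum ((\<lambda>(h, m). hit_conds B h m) ` (H \<times> UNIV))"
    using less_continuum_times_nat[OF small(2)] by (rule less_continuum_image)
  ultimately have "less_continuum \<D>" unfolding \<D>_def by (intro less_continuum_Un)
  then have few: "\<D> \<prec> (UNIV :: nat set set)" by (simp add: less_continuum_iff_lesspoll)
  obtain G where G: "is_filter (conds B) (ext_cond ok) G" and meets: "\<forall>D\<in>\<D>. G \<inter> D \<noteq> {}"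
    using MA_transfer[OF MA inj_on_subset[OF inj_cond_code subset_UNIV] conds_poset conds_ccc
      few dense] by blast
  have "long_conds B m \<in> \<D>" for m unfolding \<D>_def by blast
  then have long: "G \<inter> long_conds B m \<noteq> {}" for m using meets by blast
  have "promise_conds B b \<in> \<D>" if "b \<in> B" for b using that unfolding \<D>_def by blast
  then have "G \<inter> promise_conds B b \<noteq> {}" if "b \<in> B" for b using meets that by blast
  then have "finite {n. \<not> ok b n (generic_fun G n)}" if "b \<in> B" for b
    using generic_fun_keeps_promise[OF G long] that by blast
  moreover have "G \<inter> hit_conds B h m \<noteq> {}" if "h \<in> H" for h m
  proof -
    have "(\<lambda>(h, m). hit_conds B h m) (h, m) \<in> (\<lambda>(h, m). hit_conds B h m) ` (H \<times> UNIV)"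
      using that by (intro imageI) simp
    then have "hit_conds B h m \<in> \<D>" unfolding \<D>_def by simp
    then show ?thesis using meets by blast
  qed
  then have "infinite {n. generic_fun G n = h n}" if "h \<in> H" for h
    using generic_fun_hits[OF G] that by blast
  ultimately show ?thesis by (intro exI[of _ "generic_fun G"] conjI ballI)
qed

corollary MA_avoid_and_hit:
  fixes A H :: "(nat \<Rightarrow> nat) set"
  assumes MA: martins_axiom and small: "less_continuum A" "less_continuum H"
    and uncovered: "\<forall>h\<in>H. \<not> fin_covered_fun h A"
  shows "\<exists>g. (\<forall>a\<in>A. finite {n. g n = a n}) \<and> (\<forall>h\<in>H. infinite {n. g n = h n})"
proof -
  have fresh: "\<exists>v. \<forall>k\<in>K. v \<noteq> k n" if K: "finite K" for K :: "(nat \<Rightarrow> nat) set" and n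
  proof -
    obtain v where "v \<notin> (\<lambda>k. k n) ` K"
      using ex_new_if_finite[OF infinite_UNIV_nat finite_imageI[OF K, of "\<lambda>k. k n"]] by blast
    then show ?thesis by blast
  qed
  have avoid: "\<exists>n\<ge>m. \<forall>k\<in>K. h n \<noteq> k n"
    if h: "h \<in> H" and K: "finite K" "K \<subseteq> A" for h K m
  proof (cases "K = {}")
    case False
    then have "infinite {n. h n \<notin> (\<lambda>k. k n) ` K}"
      using uncovered h K unfolding fin_covered_fun_def by blast
    then obtain n where "m \<le> n" "h n \<notin> (\<lambda>k. k n) ` K"
      unfolding infinite_nat_iff_unbounded_le by blast
    then show ?thesis by blast
  qed auto
  have "\<exists>g. (\<forall>a\<in>A. finite {n. \<not> g n \<noteq> a n}) \<and> (\<forall>h\<in>H. infinite {n. g n = h n})"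
    by (rule MA_generic_function[where ok = "\<lambda>k n v. v \<noteq> k n", OF MA small])
      (simp_all add: fresh avoid)
  then show ?thesis by simp
qed

corollary MA_dominating:
  fixes B :: "(nat \<Rightarrow> nat) set"
  assumes MA: martins_axiom and small: "less_continuum B"
  shows "\<exists>h. \<forall>b\<in>B. finite {n. h n < b n}"
proof -
  have bound: "\<exists>v. \<forall>k\<in>K. k n \<le> v" if K: "finite K" for K :: "(nat \<Rightarrow> nat) set" and n
  proof -
    have "\<forall>k\<in>K. k n \<le> (\<Sum>k\<in>K. k n)" using member_le_sum[of _ K "\<lambda>k. k n"] K by simp
    then show ?thesis by blast
  qed
  have "less_continuum ({} :: (nat \<Rightarrow> nat) set)" by (simp add: countable_less_continuum)
  then have "\<exists>g. (\<forall>b\<in>B. finite {n. \<not> b n \<le> g n}) \<and> (\<forall>h\<in>{}. infinite {n. g n = h n})"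
    by (rule MA_generic_function[where ok = "\<lambda>k n v. k n \<le> v", OF MA small])
      (simp_all add: bound)
  then show ?thesis by (simp add: not_le)
qed

lemma less_continuum_underS: "less_continuum (underS continuum f)"
  using card_of_underS[OF card_of_Card_order[of "UNIV :: (nat \<Rightarrow> nat) set"], of f]
  unfolding less_continuum_def by (simp add: Field_card_of)

lemma less_continuum_under: "less_continuum (under continuum f)"
proof -
  have "less_continuum (underS continuum f \<union> {f})"
    using less_continuum_underS by (rule less_continuum_Un) (simp add: countable_less_continuum)
  moreover have "under continuum f \<subseteq> underS continuum f \<union> {f}"
    unfolding under_def underS_def by blast
  ultimately show ?thesis by (rule less_continuum_subset)
qed

(* Under MA, c is regular: a cofinal set of size < c would give, via a dominating function
   for each initial segment and then for these, a function escaping every initial segment. *)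
theorem MA_continuum_regular:
  assumes MA: martins_axiom shows "regularCard continuum"
  unfolding regularCard_def
proof (intro allI impI)
  fix K assume K: "K \<subseteq> Field continuum \<and> cofinal K continuum"
  have "|K| \<le>o continuum" using card_of_mono1[of K UNIV] by simp
  moreover have "\<not> |K| <o continuum"
  proof
    assume "|K| <o continuum"
    have "\<forall>k\<in>K. \<exists>g. \<forall>b\<in>under continuum k. finite {n. g n < b n}"
      using MA_dominating[OF MA less_continuum_under] by blast
    then obtain bound where bound: "\<forall>k\<in>K. \<forall>b\<in>under continuum k. finite {n. bound k n < b n}"
      by metis
    have "less_continuum (bound ` K)"
      using \<open>|K| <o continuum\<close> less_continuum_image unfolding less_continuum_def by blast
    then obtain h where h: "\<forall>b\<in>bound ` K. finite {n. h n < b n}" using MA_dominating[OF MA] by blast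
    have "(\<lambda>n. Suc (h n)) \<in> Field continuum" by (simp add: Field_card_of)
    then obtain k where k: "k \<in> K" "(\<lambda>n. Suc (h n), k) \<in> continuum"
      using K unfolding cofinal_def by blast
    have "(\<lambda>n. Suc (h n)) \<in> under continuum k" using k(2) by (simp add: under_def)
    then have "finite {n. bound k n < Suc (h n)}" using bspec[OF bspec[OF bound k(1)]] by simp
    moreover have "finite {n. h n < bound k n}" using h k(1) by blast
    ultimately have "finite ({n. bound k n < Suc (h n)} \<union> {n. h n < bound k n})" by simp
    moreover have "{n. bound k n < Suc (h n)} \<union> {n. h n < bound k n} = UNIV" by auto
    ultimately show False by simp
  qed
  ultimately show "|K| =o continuum" using ordLeq_iff_ordLess_or_ordIso by blast
qed

lemma fin_covered_mono: "fin_covered_fun f A \<Longrightarrow> A \<subseteq> A' \<Longrightarrow> fin_covered_fun f A'"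
  unfolding fin_covered_fun_def by blast

lemma almost_disjoint_not_covered:
  assumes "\<forall>a\<in>A. finite {n. g n = a n}" shows "\<not> fin_covered_fun g A"
proof
  assume "fin_covered_fun g A"
  then obtain S where S: "S \<subseteq> A" "finite S" "finite {k. g k \<notin> (\<lambda>a. a k) ` S}"
    unfolding fin_covered_fun_def by blast
  have "finite (\<Union>a\<in>S. {n. g n = a n})" using S(1,2) assms by blast
  moreover have "UNIV \<subseteq> {k. g k \<notin> (\<lambda>a. a k) ` S} \<union> (\<Union>a\<in>S. {n. g n = a n})" by auto
  ultimately have "finite (UNIV :: nat set)" using S(3) finite_subset by blast
  then show False by simp
qed

theorem very_mad_card:
  assumes MA: martins_axiom and "infinite \<A>" and mad: "very_mad \<A>"
  shows "\<A> \<approx> (UNIV :: nat set set)"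
proof (rule ccontr)
  assume not_eq: "\<not> \<A> \<approx> (UNIV :: nat set set)"
  have "\<A> \<lesssim> (UNIV :: nat set set)"
    using subset_imp_lepoll[of \<A> UNIV] funs_eqpoll_sets lepoll_trans2 by blast
  then have "less_continuum \<A>"
    using not_eq by (simp add: less_continuum_iff_lesspoll lesspoll_def)
  moreover have "less_continuum ({} :: (nat \<Rightarrow> nat) set)" by (simp add: countable_less_continuum)
  ultimately obtain g where g: "\<forall>a\<in>\<A>. finite {n. g n = a n}"
    using MA_avoid_and_hit[OF MA] by blast
  then have "\<not> fin_covered_family {g} \<A>"
    using almost_disjoint_not_covered unfolding fin_covered_family_def by blast
  moreover have "{g} \<prec> \<A>" using finite_lesspoll_infinite[OF \<open>infinite \<A>\<close>, of "{g}"] by simp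
  ultimately obtain a where "a \<in> \<A>" "infinite {n. g n = a n}"
    using mad unfolding very_mad_def by blast
  then show False using g by blast
qed

(* The transfinite construction, indexed by the Baire space well-ordered in type c. *)
definition earlier :: "((nat \<Rightarrow> nat) \<Rightarrow> nat \<Rightarrow> nat) \<Rightarrow> (nat \<Rightarrow> nat) \<Rightarrow> (nat \<Rightarrow> nat) set" where
  "earlier E f = E ` underS continuum f"

definition targets :: "((nat \<Rightarrow> nat) \<Rightarrow> nat \<Rightarrow> nat) \<Rightarrow> (nat \<Rightarrow> nat) \<Rightarrow> (nat \<Rightarrow> nat) set" where
  "targets E f = {h \<in> under continuum f. \<not> fin_covered_fun h (earlier E f)}"

definition good_choice :: "((nat \<Rightarrow> nat) \<Rightarrow> nat \<Rightarrow> nat) \<Rightarrow> (nat \<Rightarrow> nat) \<Rightarrow> (nat \<Rightarrow> nat) \<Rightarrow> bool" where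
  "good_choice E f x \<longleftrightarrow> (\<forall>a\<in>earlier E f. finite {n. x n = a n}) \<and>
     (\<forall>h\<in>targets E f. infinite {n. x n = h n})"

definition mad_enum :: "(nat \<Rightarrow> nat) \<Rightarrow> nat \<Rightarrow> nat" where
  "mad_enum = wo_rel.worec continuum (\<lambda>E f. SOME x. good_choice E f x)"

lemma wo_rel_continuum: "wo_rel continuum"
  unfolding wo_rel_def by (rule card_of_Well_order)

lemma mad_enum_unfold: "mad_enum f = (SOME x. good_choice mad_enum f x)"
proof -
  have "wo_rel.adm_wo continuum (\<lambda>E f. SOME x. good_choice E f x)"
    unfolding wo_rel.adm_wo_def[OF wo_rel_continuum] earlier_def good_choice_def targets_def
    by (simp cong: image_cong)
  then show ?thesis
    using wo_rel.worec_fixpoint[OF wo_rel_continuum] unfolding mad_enum_def by metis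
qed

lemma mad_enum_good:
  assumes MA: martins_axiom shows "good_choice mad_enum f (mad_enum f)"
proof -
  have "less_continuum (earlier mad_enum f)"
    unfolding earlier_def using less_continuum_underS by (rule less_continuum_image)
  moreover have "less_continuum (targets mad_enum f)"
    using less_continuum_under by (rule less_continuum_subset) (auto simp: targets_def)
  moreover have "\<forall>h\<in>targets mad_enum f. \<not> fin_covered_fun h (earlier mad_enum f)"
    unfolding targets_def by blast
  ultimately have "\<exists>x. good_choice mad_enum f x"
    unfolding good_choice_def by (rule MA_avoid_and_hit[OF MA])
  then show ?thesis unfolding mad_enum_unfold[of f] by (rule someI_ex)
qed

lemma mad_enum_almost_disjoint:
  assumes MA: martins_axiom and "f1 \<noteq> f2"
  shows "finite {n. mad_enum f1 n = mad_enum f2 n}"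
proof -
  have "(f1, f2) \<in> continuum \<or> (f2, f1) \<in> continuum"
    using wo_rel.TOTALS[OF wo_rel_continuum] by (simp add: Field_card_of)
  then show ?thesis
  proof
    assume "(f1, f2) \<in> continuum"
    then have "mad_enum f1 \<in> earlier mad_enum f2"
      using assms(2) unfolding earlier_def underS_def by blast
    then show ?thesis using mad_enum_good[OF MA, of f2] unfolding good_choice_def
      by (simp add: eq_commute)
  next
    assume "(f2, f1) \<in> continuum"
    then have "mad_enum f2 \<in> earlier mad_enum f1"
      using assms(2) unfolding earlier_def underS_def by blast
    then show ?thesis using mad_enum_good[OF MA, of f1] unfolding good_choice_def by blast
  qed
qed

(* By regularity of c, every small set of functions lies below a single stage. *)
lemma MA_bounded_below:
  assumes MA: martins_axiom and "less_continuum F"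
  shows "\<exists>i. F \<subseteq> under continuum i"
proof -
  have "relChain continuum (under continuum)"
    using wo_rel.TRANS[OF wo_rel_continuum] unfolding relChain_def under_def
    by (auto dest: transD)
  moreover have "F \<subseteq> (\<Union>i\<in>Field continuum. under continuum i)"
    using wo_rel.REFL[OF wo_rel_continuum] unfolding under_def refl_on_def Field_card_of
    by blast
  ultimately show ?thesis
    using regularCard_UNION[OF card_of_Card_order MA_continuum_regular[OF MA]] assms(2)
    unfolding less_continuum_def by blast
qed

lemma mad_enum_catches:
  assumes MA: martins_axiom and small: "less_continuum F"
    and uncovered: "\<not> fin_covered_family F (range mad_enum)"
  shows "\<exists>i. \<forall>f\<in>F. infinite {n. f n = mad_enum i n}"
proof -
  obtain i where i: "F \<subseteq> under continuum i" using MA_bounded_below[OF MA small] by blast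
  have "h \<in> targets mad_enum i" if h: "h \<in> F" for h
  proof -
    have "\<not> fin_covered_fun h (range mad_enum)"
      using uncovered h unfolding fin_covered_family_def by blast
    moreover have "earlier mad_enum i \<subseteq> range mad_enum" unfolding earlier_def by blast
    ultimately show ?thesis using fin_covered_mono h i unfolding targets_def by blast
  qed
  then have "infinite {n. f n = mad_enum i n}" if "f \<in> F" for f
    using mad_enum_good[OF MA, of i] that unfolding good_choice_def by (auto simp: eq_commute)
  then show ?thesis by blast
qed

theorem very_mad_exists:
  assumes MA: martins_axiom
  shows "infinite (range mad_enum) \<and> very_mad (range mad_enum)"
proof -
  have "inj mad_enum"
  proof (rule injI, rule ccontr)
    fix f1 f2 assume "mad_enum f1 = mad_enum f2" "f1 \<noteq> f2"
    then show False using mad_enum_almost_disjoint[OF MA, of f1 f2] by simp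
  qed
  then have "infinite (range mad_enum)" using infinite_funs finite_imageD by blast
  moreover have "almost_disjoint_family (range mad_enum)"
    unfolding almost_disjoint_family_def
  proof (intro ballI impI)
    fix g0 g1 assume "g0 \<in> range mad_enum" "g1 \<in> range mad_enum" "g0 \<noteq> g1"
    then obtain f0 f1 where "g0 = mad_enum f0" "g1 = mad_enum f1" "f0 \<noteq> f1" by blast
    then show "finite {n. g0 n = g1 n}" using mad_enum_almost_disjoint[OF MA] by simp
  qed
  moreover have "\<exists>g\<in>range mad_enum. \<forall>f\<in>F. infinite {n. f n = g n}"
    if F: "F \<prec> range mad_enum" "\<not> fin_covered_family F (range mad_enum)" for F
  proof -
    have "|F| <o |range mad_enum|" using F(1) by (simp add: lesspoll_iff_ordLess)
    moreover have "|range mad_enum| \<le>o continuum" using card_of_mono1[of "range mad_enum" UNIV] by simp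
    ultimately have "less_continuum F" unfolding less_continuum_def by (rule ordLess_ordLeq_trans)
    then show ?thesis using mad_enum_catches[OF MA _ F(2)] by blast
  qed
  ultimately show ?thesis unfolding very_mad_def by blast
qed

theorem mainTheorem2:
  assumes "martins_axiom"
  shows "(\<exists>\<A>. infinite \<A> \<and> very_mad \<A>) \<and>
         (\<forall>\<A>. infinite \<A> \<and> very_mad \<A> \<longrightarrow> \<A> \<approx> (UNIV :: nat set set))"
  using very_mad_exists[OF assms] very_mad_card[OF assms] by blast

end
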